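(* Let $m\geq 4$. There is a constant $\tilde C_m$, depending only on $m$, with $\tilde C_m>0$ when $m\geq 5$ and $\tilde C_4=0$, such that for every non-negative continuous $\frac{2\pi}{m}$-periodic function $h:\mathbb{R}\to\mathbb{R}$, \[ c_h:=12\,(\partial_{\theta\theta}+4)^{-1}h\ \geq\ \tilde C_m\,\frac{1}{2\pi}\int_{-\pi}^{\pi}h . \] Moreover, if there exists $\theta$ with $c_h(\theta)=0$, then necessarily $h\equiv0$.
   Context: For $m\ge3$, $(\partial_{\theta\theta}+4)^{-1}$ denotes the inverse of $\partial_{\theta\theta}+4$ acting on $2\pi/m$-periodic functions on $\mathbb{R}$ (equivalently $m$-fold symmetric functions on $\mathbb{S}^1=\mathbb{R}/2\pi\mathbb{Z}$), which is well defined since such functions have no Fourier modes $\pm2$. *)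

theory Defs
  imports "HOL-Analysis.Analysis"
begin

definition periodic_m :: "nat \<Rightarrow> (real \<Rightarrow> real) \<Rightarrow> bool" where
  "periodic_m m f \<longleftrightarrow> (\<forall>\<theta>. f (\<theta> + 2 * pi / real m) = f \<theta>)"

text \<open>The inverse of (d^2/d theta^2 + 4) on (2 pi / m)-periodic functions:
  the unique (2 pi / m)-periodic twice differentiable u with u'' + 4 u = h.\<close>
definition inv_op :: "nat \<Rightarrow> (real \<Rightarrow> real) \<Rightarrow> real \<Rightarrow> real" where
  "inv_op m h = (THE u. periodic_m m u
      \<and> (\<forall>\<theta>. (u has_real_derivative deriv u \<theta>) (at \<theta>))
      \<and> (\<forall>\<theta>. (deriv u has_real_derivative (h \<theta> - 4 * u \<theta>)) (at \<theta>)))"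

end

(* Write T = 2 pi / m.  The T-periodic solution of u'' + 4 u = h is the convolution
     u x = 1 / (4 sin T) * integral over [x - T, x] of cos (2 (x - s) - T) * h s ds,
   and it is the only one because cos (2 T) <> 1, i.e. u'' + 4 u = 0 has no nonzero T-periodic
   solution.  For m >= 4 we have T <= pi / 2, so on the window the kernel cos (2 (x - s) - T)
   lies between cos T >= 0 and 1.  Hence 12 u x >= 3 cot T * (integral of h over one period)
   = 3 T cot T * (mean of h over [-pi, pi]), and 3 T cot T is positive exactly when m >= 5.
   If u vanishes at one point, the kernel is positive inside the window, so h vanishes on an
   open interval of length T, and by continuity and periodicity everywhere. *)

theory Submission
  imports Defs "HOL-Library.Periodic_Fun"
begin

lemma continuous_on_UNIV_has_antiderivative:
  fixes f :: "real \<Rightarrow> real"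
  assumes "continuous_on UNIV f"
  shows "\<exists>F. \<forall>x. (F has_real_derivative f x) (at x)"
  using einterval_antiderivative[of "-\<infinity>" "\<infinity>" f] assms
  by (auto simp: has_real_derivative_iff_has_vector_derivative continuous_on_eq_continuous_at)

definition antiderivative :: "(real \<Rightarrow> real) \<Rightarrow> real \<Rightarrow> real" where
  "antiderivative f = (SOME F. \<forall>x. (F has_real_derivative f x) (at x))"

lemma antiderivative_has_real_derivative:
  assumes "continuous_on UNIV f"
  shows "(antiderivative f has_real_derivative f x) (at x)"
  using someI_ex[OF continuous_on_UNIV_has_antiderivative[OF assms]]
  unfolding antiderivative_def by blast

lemma integral_eq_antiderivative_diff:
  assumes "continuous_on UNIV f" and "a \<le> b"
  shows "integral {a..b} f = antiderivative f b - antiderivative f a"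
  using assms antiderivative_has_real_derivative[OF assms(1)]
  by (intro integral_unique fundamental_theorem_of_calculus)
     (auto simp: has_real_derivative_iff_has_vector_derivative[symmetric]
           intro: has_field_derivative_at_within)

lemma harmonic_oscillator_solution:
  fixes w w' :: "real \<Rightarrow> real"
  assumes "\<omega> \<noteq> 0"
    and w: "\<And>t. (w has_real_derivative w' t) (at t)"
    and w': "\<And>t. (w' has_real_derivative - (\<omega>\<^sup>2 * w t)) (at t)"
  shows "w t = w 0 * cos (\<omega> * t) + w' 0 / \<omega> * sin (\<omega> * t)"
proof -
  define z where "z t = w t - w 0 * cos (\<omega> * t) - w' 0 / \<omega> * sin (\<omega> * t)" for t
  define z' where "z' t = w' t + \<omega> * w 0 * sin (\<omega> * t) - w' 0 * cos (\<omega> * t)" for t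
  have z: "(z has_real_derivative z' t) (at t)" for t
    unfolding z_def[abs_def] z'_def
    by (auto intro!: derivative_eq_intros w simp: \<open>\<omega> \<noteq> 0\<close>)
  have z': "(z' has_real_derivative - (\<omega>\<^sup>2 * z t)) (at t)" for t
    unfolding z'_def[abs_def] z_def
    by (auto intro!: derivative_eq_intros w' simp: \<open>\<omega> \<noteq> 0\<close> algebra_simps power2_eq_square)
  define energy where "energy t = (z' t)\<^sup>2 + \<omega>\<^sup>2 * (z t)\<^sup>2" for t
  have "(energy has_real_derivative 0) (at t)" for t
  proof -
    have "(energy has_real_derivative 2 * z' t * - (\<omega>\<^sup>2 * z t) + \<omega>\<^sup>2 * (2 * z t * z' t)) (at t)"
      unfolding energy_def[abs_def] by (auto intro!: derivative_eq_intros z z')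
    then show ?thesis by (simp add: algebra_simps)
  qed
  then have "energy t = energy 0" by (intro DERIV_isconst_all) auto
  also have "energy 0 = 0" by (simp add: energy_def z_def z'_def \<open>\<omega> \<noteq> 0\<close>)
  finally have "z t = 0" using \<open>\<omega> \<noteq> 0\<close>
    by (simp add: energy_def add_nonneg_eq_0_iff)
  then show ?thesis by (simp add: z_def)
qed

lemma periodic_harmonic_oscillator_eq_0:
  fixes w w' :: "real \<Rightarrow> real"
  assumes "\<omega> \<noteq> 0"
    and w: "\<And>t. (w has_real_derivative w' t) (at t)"
    and w': "\<And>t. (w' has_real_derivative - (\<omega>\<^sup>2 * w t)) (at t)"
    and periodic: "\<And>t. w (t + T) = w t" and "cos (\<omega> * T) \<noteq> 1"
  shows "w t = 0"
proof -
  define \<alpha> \<beta> where "\<alpha> = w 0" and "\<beta> = w' 0 / \<omega>"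
  define c s where "c = cos (\<omega> * T)" and "s = sin (\<omega> * T)"
  have w_eq: "w t = \<alpha> * cos (\<omega> * t) + \<beta> * sin (\<omega> * t)" for t
    unfolding \<alpha>_def \<beta>_def by (rule harmonic_oscillator_solution[OF assms(1-3)])
  have "w (0 + T) = w 0" by (rule periodic)
  then have e1: "\<alpha> * (c - 1) + \<beta> * s = 0"
    by (simp add: w_eq c_def s_def algebra_simps)
  have "w (pi / (2 * \<omega>) + T) = w (pi / (2 * \<omega>))" by (rule periodic)
  then have e2: "\<beta> * (c - 1) - \<alpha> * s = 0"
    using \<open>\<omega> \<noteq> 0\<close> by (simp add: w_eq c_def s_def cos_add sin_add algebra_simps)
  have "\<alpha> * ((c - 1)\<^sup>2 + s\<^sup>2) = (c - 1) * (\<alpha> * (c - 1) + \<beta> * s) - s * (\<beta> * (c - 1) - \<alpha> * s)"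
    by algebra
  then have "\<alpha> * ((c - 1)\<^sup>2 + s\<^sup>2) = 0" using e1 e2 by simp
  moreover have "(c - 1)\<^sup>2 + s\<^sup>2 \<noteq> 0" using \<open>cos (\<omega> * T) \<noteq> 1\<close> by (simp add: c_def)
  ultimately have "\<alpha> = 0" by (metis mult_eq_0_iff)
  with e2 \<open>cos (\<omega> * T) \<noteq> 1\<close> have "\<beta> = 0" by (simp add: c_def)
  with \<open>\<alpha> = 0\<close> show ?thesis by (simp add: w_eq)
qed

lemma cos_neq_1_between_0_2pi:
  assumes "0 < x" "x < 2 * pi"
  shows "cos x \<noteq> 1"
proof
  assume "cos x = 1"
  then obtain n :: int where "x = n * 2 * pi" by (auto simp: cos_one_2pi_int)
  with assms have "0 < n" "n < 1" by (auto simp: zero_less_mult_iff)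
  then show False by simp
qed

lemma inv_op_eqI:
  assumes "3 \<le> m" and "periodic_m m u"
    and u: "\<And>\<theta>. (u has_real_derivative u' \<theta>) (at \<theta>)"
    and u': "\<And>\<theta>. (u' has_real_derivative h \<theta> - 4 * u \<theta>) (at \<theta>)"
  shows "inv_op m h = u"
  unfolding inv_op_def
proof (rule the_equality)
  have "deriv u = u'" using u by (intro ext DERIV_imp_deriv)
  then show "periodic_m m u \<and> (\<forall>\<theta>. (u has_real_derivative deriv u \<theta>) (at \<theta>))
      \<and> (\<forall>\<theta>. (deriv u has_real_derivative h \<theta> - 4 * u \<theta>) (at \<theta>))"
    using assms by simp
next
  fix v
  assume "periodic_m m v \<and> (\<forall>\<theta>. (v has_real_derivative deriv v \<theta>) (at \<theta>))
      \<and> (\<forall>\<theta>. (deriv v has_real_derivative h \<theta> - 4 * v \<theta>) (at \<theta>))"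
  then have "periodic_m m v" and v: "\<And>\<theta>. (v has_real_derivative deriv v \<theta>) (at \<theta>)"
    and v': "\<And>\<theta>. (deriv v has_real_derivative h \<theta> - 4 * v \<theta>) (at \<theta>)"
    by auto
  have cos_4pi_m: "cos (2 * (2 * pi / real m)) \<noteq> 1"
    using \<open>3 \<le> m\<close> by (intro cos_neq_1_between_0_2pi) (auto simp: field_simps)
  have "v \<theta> - u \<theta> = 0" for \<theta>
  proof (rule periodic_harmonic_oscillator_eq_0[where w = "\<lambda>\<theta>. v \<theta> - u \<theta>"
        and w' = "\<lambda>\<theta>. deriv v \<theta> - u' \<theta>" and \<omega> = 2 and T = "2 * pi / real m"])
    show "((\<lambda>\<theta>. v \<theta> - u \<theta>) has_real_derivative deriv v \<theta> - u' \<theta>) (at \<theta>)" for \<theta>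
      by (intro DERIV_diff v u)
    show "((\<lambda>\<theta>. deriv v \<theta> - u' \<theta>) has_real_derivative - (2\<^sup>2 * (v \<theta> - u \<theta>))) (at \<theta>)" for \<theta>
      using DERIV_diff[OF v' u'] by (simp add: algebra_simps)
    show "v (\<theta> + 2 * pi / real m) - u (\<theta> + 2 * pi / real m) = v \<theta> - u \<theta>" for \<theta>
      using \<open>periodic_m m v\<close> \<open>periodic_m m u\<close> by (simp add: periodic_m_def)
  qed (use cos_4pi_m in simp_all)
  then show "v = u" by auto
qed

lemma periodic_eq_0_if_vanishing_on_period:
  fixes f :: "real \<Rightarrow> real"
  assumes "continuous_on UNIV f" and periodic: "\<And>x. f (x + T) = f x" and "0 < T"
    and vanish: "\<And>x. a < x \<Longrightarrow> x < a + T \<Longrightarrow> f x = 0"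
  shows "f x = 0"
proof -
  interpret periodic_fun_simple f T by standard (rule periodic)
  have "continuous_on (closure {a<..<a + T}) f"
    using continuous_on_subset[OF assms(1)] by blast
  then have vanish_closed: "f y = 0" if "a \<le> y" "y \<le> a + T" for y
    by (rule continuous_constant_on_closure) (use vanish that \<open>0 < T\<close> in auto)
  define k where "k = \<lfloor>(x - a) / T\<rfloor>"
  have "of_int k \<le> (x - a) / T" "(x - a) / T \<le> of_int k + 1"
    unfolding k_def by linarith+
  then have "a \<le> x - of_int k * T" "x - of_int k * T \<le> a + T"
    using \<open>0 < T\<close> by (simp_all add: field_simps)
  then have "f (x - of_int k * T) = 0" by (rule vanish_closed)
  then show ?thesis using minus_of_int[of x k] by simp
qed

locale periodic_source =
  fixes h :: "real \<Rightarrow> real" and T :: real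
  assumes continuous: "continuous_on UNIV h"
    and periodic: "h (x + T) = h x"
begin

lemma periodic_minus: "h (x - T) = h x"
  using periodic[of "x - T"] by simp

definition cos_moment :: "real \<Rightarrow> real" where
  "cos_moment = antiderivative (\<lambda>s. cos (2 * s) * h s)"

definition sin_moment :: "real \<Rightarrow> real" where
  "sin_moment = antiderivative (\<lambda>s. sin (2 * s) * h s)"

definition phase_primitive :: "real \<Rightarrow> real \<Rightarrow> real" where
  "phase_primitive A s = cos A * cos_moment s + sin A * sin_moment s"

lemma cos_moment_has_real_derivative:
  "(cos_moment has_real_derivative cos (2 * s) * h s) (at s)"
  unfolding cos_moment_def
  by (intro antiderivative_has_real_derivative continuous_intros continuous)

lemma sin_moment_has_real_derivative:
  "(sin_moment has_real_derivative sin (2 * s) * h s) (at s)"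
  unfolding sin_moment_def
  by (intro antiderivative_has_real_derivative continuous_intros continuous)

lemma phase_primitive_has_real_derivative:
  "(phase_primitive A has_real_derivative cos (A - 2 * s) * h s) (at s)"
proof -
  have "(phase_primitive A has_real_derivative
      cos A * (cos (2 * s) * h s) + sin A * (sin (2 * s) * h s)) (at s)"
    unfolding phase_primitive_def[abs_def]
    by (intro DERIV_add DERIV_cmult cos_moment_has_real_derivative sin_moment_has_real_derivative)
  then show ?thesis by (simp add: cos_diff algebra_simps)
qed

lemma phase_primitive_add_pi_half:
  "phase_primitive (A + pi / 2) s = - sin A * cos_moment s + cos A * sin_moment s"
  by (simp add: phase_primitive_def cos_add sin_add)

lemma phase_primitive_diagonal_has_real_derivative:
  "((\<lambda>x. phase_primitive (2 * x + c) (x + d)) has_real_derivative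
     2 * phase_primitive (2 * x + c + pi / 2) (x + d) + cos (c - 2 * d) * h (x + d)) (at x)"
proof -
  have D: "((\<lambda>x. phase_primitive (2 * x + c) (x + d)) has_real_derivative
      - 2 * sin (2 * x + c) * cos_moment (x + d) + cos (2 * x + c) * (cos (2 * (x + d)) * h (x + d))
      + (2 * cos (2 * x + c) * sin_moment (x + d) + sin (2 * x + c) * (sin (2 * (x + d)) * h (x + d)))) (at x)"
    unfolding phase_primitive_def
    by (auto intro!: derivative_eq_intros cos_moment_has_real_derivative[THEN DERIV_chain2]
        sin_moment_has_real_derivative[THEN DERIV_chain2])
  have "cos (c - 2 * d) = cos (2 * x + c) * cos (2 * (x + d)) + sin (2 * x + c) * sin (2 * (x + d))"
    using cos_diff[of "2 * x + c" "2 * (x + d)"] by (simp add: algebra_simps)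
  then have "- 2 * sin (2 * x + c) * cos_moment (x + d) + cos (2 * x + c) * (cos (2 * (x + d)) * h (x + d))
      + (2 * cos (2 * x + c) * sin_moment (x + d) + sin (2 * x + c) * (sin (2 * (x + d)) * h (x + d)))
    = 2 * phase_primitive (2 * x + c + pi / 2) (x + d) + cos (c - 2 * d) * h (x + d)"
    unfolding phase_primitive_add_pi_half by (simp add: algebra_simps)
  then show ?thesis using D by simp
qed

lemma phase_primitive_shift:
  "phase_primitive (A + 2 * T) (b + T) - phase_primitive (A + 2 * T) (a + T)
     = phase_primitive A b - phase_primitive A a"
proof -
  define F where "F s = phase_primitive (A + 2 * T) (s + T) - phase_primitive A s" for s
  have "(F has_real_derivative cos (A - 2 * s) * h (s + T) - cos (A - 2 * s) * h s) (at s)" for s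
    unfolding F_def[abs_def]
    by (auto intro!: derivative_eq_intros phase_primitive_has_real_derivative[THEN DERIV_chain2]
        phase_primitive_has_real_derivative simp: algebra_simps)
  then have "\<forall>s. (F has_real_derivative 0) (at s)" by (simp add: periodic)
  then have "F b = F a" by (rule DERIV_isconst_all)
  then show ?thesis by (simp add: F_def)
qed

text \<open>\<open>green_window c x\<close> is the integral of \<open>cos (2 * (x - s) + c) * h s\<close> over
  \<open>x - T \<le> s \<le> x\<close>.\<close>
definition green_window :: "real \<Rightarrow> real \<Rightarrow> real" where
  "green_window c x = phase_primitive (2 * x + c) x - phase_primitive (2 * x + c) (x - T)"

lemma green_window_has_real_derivative:
  "(green_window c has_real_derivative
     2 * green_window (c + pi / 2) x + (cos c - cos (c + 2 * T)) * h x) (at x)"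
proof -
  have "((\<lambda>x. phase_primitive (2 * x + c) (x + 0) - phase_primitive (2 * x + c) (x + - T))
      has_real_derivative
        2 * phase_primitive (2 * x + c + pi / 2) (x + 0) + cos (c - 2 * 0) * h (x + 0)
      - (2 * phase_primitive (2 * x + c + pi / 2) (x + - T) + cos (c - 2 * - T) * h (x + - T))) (at x)"
    by (intro DERIV_diff phase_primitive_diagonal_has_real_derivative)
  then show ?thesis
    by (simp add: green_window_def[abs_def] periodic_minus algebra_simps)
qed

lemma green_window_add_pi: "green_window (c + pi) x = - green_window c x"
  by (simp add: green_window_def phase_primitive_def add.assoc[symmetric])

lemma green_window_periodic: "green_window c (x + T) = green_window c x"
  using phase_primitive_shift[of "2 * x + c" x "x - T"]
  by (simp add: green_window_def algebra_simps)

definition periodic_solution :: "real \<Rightarrow> real" where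
  "periodic_solution x = green_window (- T) x / (4 * sin T)"

lemma periodic_solution_has_real_derivative:
  "(periodic_solution has_real_derivative green_window (pi / 2 - T) x / (2 * sin T)) (at x)"
proof -
  have "(periodic_solution has_real_derivative
      (2 * green_window (- T + pi / 2) x + (cos (- T) - cos (- T + 2 * T)) * h x) / (4 * sin T)) (at x)"
    unfolding periodic_solution_def[abs_def]
    by (intro DERIV_cdivide green_window_has_real_derivative)
  then show ?thesis by simp
qed

lemma periodic_solution_deriv_has_real_derivative:
  assumes "sin T \<noteq> 0"
  shows "((\<lambda>x. green_window (pi / 2 - T) x / (2 * sin T)) has_real_derivative
    h x - 4 * periodic_solution x) (at x)"
proof -
  have D: "((\<lambda>x. green_window (pi / 2 - T) x / (2 * sin T)) has_real_derivative
      (2 * green_window (pi / 2 - T + pi / 2) x + (cos (pi / 2 - T) - cos (pi / 2 - T + 2 * T)) * h x)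
        / (2 * sin T)) (at x)"
    by (intro DERIV_cdivide green_window_has_real_derivative)
  have "green_window (pi / 2 - T + pi / 2) x = - green_window (- T) x"
    using green_window_add_pi[of "- T" x] by (simp add: algebra_simps)
  moreover have "cos (pi / 2 - T) - cos (pi / 2 - T + 2 * T) = 2 * sin T"
    by (simp add: cos_diff cos_add)
  moreover have "(2 * - green_window (- T) x + 2 * sin T * h x) / (2 * sin T)
      = h x - 4 * periodic_solution x"
    using assms by (simp add: periodic_solution_def field_simps)
  ultimately show ?thesis using D by simp
qed

lemma periodic_solution_periodic: "periodic_solution (x + T) = periodic_solution x"
  by (simp add: periodic_solution_def green_window_periodic)

lemma inv_op_eq_periodic_solution:
  assumes "3 \<le> m" and T: "T = 2 * pi / real m"
  shows "inv_op m h = periodic_solution"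
proof (rule inv_op_eqI[OF \<open>3 \<le> m\<close>])
  have "0 < T" "T < pi" using \<open>3 \<le> m\<close> unfolding T by (auto simp: field_simps)
  then have "sin T \<noteq> 0" using sin_gt_zero by force
  then show "((\<lambda>x. green_window (pi / 2 - T) x / (2 * sin T)) has_real_derivative
      h \<theta> - 4 * periodic_solution \<theta>) (at \<theta>)" for \<theta>
    by (rule periodic_solution_deriv_has_real_derivative)
  show "periodic_m m periodic_solution"
    using periodic_solution_periodic by (simp add: periodic_m_def flip: T)
qed (rule periodic_solution_has_real_derivative)

lemma green_window_lower_bound:
  assumes nonneg: "\<And>s. 0 \<le> h s" and "0 \<le> T" "T \<le> pi"
  shows "cos T * integral {x - T..x} h \<le> green_window (- T) x"
proof -
  define A where "A = 2 * x - T"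
  define H where "H = antiderivative h"
  have "phase_primitive A (x - T) - cos T * H (x - T) \<le> phase_primitive A x - cos T * H x"
  proof (rule DERIV_nonneg_imp_nondecreasing[where f = "\<lambda>s. phase_primitive A s - cos T * H s"])
    fix s assume s: "x - T \<le> s" "s \<le> x"
    have "cos T \<le> cos \<bar>A - 2 * s\<bar>"
      using s assms by (intro cos_monotone_0_pi_le) (auto simp: A_def)
    then have "0 \<le> (cos (A - 2 * s) - cos T) * h s" using nonneg[of s] by simp
    moreover have "((\<lambda>s. phase_primitive A s - cos T * H s) has_real_derivative
        (cos (A - 2 * s) - cos T) * h s) (at s)"
      using DERIV_diff[OF phase_primitive_has_real_derivative
          DERIV_cmult[OF antiderivative_has_real_derivative[OF continuous]]]
      by (simp add: H_def algebra_simps)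
    ultimately show "\<exists>y. ((\<lambda>s. phase_primitive A s - cos T * H s) has_real_derivative y) (at s) \<and> 0 \<le> y"
      by blast
  qed (use \<open>0 \<le> T\<close> in simp)
  moreover have "integral {x - T..x} h = H x - H (x - T)"
    unfolding H_def using \<open>0 \<le> T\<close> by (intro integral_eq_antiderivative_diff continuous) simp
  ultimately show ?thesis
    unfolding green_window_def A_def by (simp add: right_diff_distrib)
qed

lemma integral_multiple_periods:
  assumes "0 \<le> T"
  shows "integral {a..a + real n * T} h = real n * integral {x - T..x} h"
proof -
  define H where "H = antiderivative h"
  have H: "(H has_real_derivative h s) (at s)" for s
    unfolding H_def by (rule antiderivative_has_real_derivative[OF continuous])
  have "((\<lambda>y. H (y + T) - H y) has_real_derivative h (y + T) * 1 - h y) (at y)" for y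
    by (intro DERIV_diff DERIV_chain2[OF H] H) (auto intro!: derivative_eq_intros)
  then have "((\<lambda>y. H (y + T) - H y) has_real_derivative 0) (at y)" for y
    by (simp add: periodic)
  then have increment: "H (y + T) - H y = H x - H (x - T)" for y
    using DERIV_isconst_all[of "\<lambda>y. H (y + T) - H y" y "x - T"] by simp
  have "H (a + real n * T) - H a = real n * (H x - H (x - T))"
  proof (induction n)
    case (Suc n)
    then show ?case
      using increment[of "a + real n * T"] by (simp add: algebra_simps)
  qed simp
  moreover have "0 \<le> real n * T" using assms by simp
  ultimately show ?thesis
    unfolding H_def using assms
    by (simp add: integral_eq_antiderivative_diff[OF continuous])
qed

lemma periodic_solution_ge_mean:
  assumes "\<And>s. 0 \<le> h s" and "0 < T" "T < pi" and n: "real n * T = 2 * pi"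
  shows "3 * T * cos T / sin T * (1 / (2 * pi) * integral {-pi..pi} h) \<le> 12 * periodic_solution x"
proof -
  have "0 < sin T" using assms by (intro sin_gt_zero)
  have "integral {-pi..pi} h = real n * integral {x - T..x} h"
    using integral_multiple_periods[of "-pi" n x] n \<open>0 < T\<close> by simp
  then have "3 * T * cos T / sin T * (1 / (2 * pi) * integral {-pi..pi} h)
      = 3 / sin T * (cos T * integral {x - T..x} h) * (real n * T / (2 * pi))"
    by (simp add: field_simps)
  also have "\<dots> = 3 / sin T * (cos T * integral {x - T..x} h)"
    by (simp add: n)
  also have "\<dots> \<le> 3 / sin T * green_window (- T) x"
    using green_window_lower_bound[of x] assms \<open>0 < sin T\<close> by (intro mult_left_mono) auto
  also have "\<dots> = 12 * periodic_solution x"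
    by (simp add: periodic_solution_def)
  finally show ?thesis .
qed

lemma green_window_eq_0_imp_vanishing:
  assumes nonneg: "\<And>s. 0 \<le> h s" and "T \<le> pi / 2"
    and "green_window (- T) x0 = 0" and s: "x0 - T < s" "s < x0"
  shows "h s = 0"
proof -
  define \<psi> where "\<psi> = phase_primitive (2 * x0 - T)"
  have \<psi>: "(\<psi> has_real_derivative cos (2 * x0 - T - 2 * t) * h t) (at t)" for t
    unfolding \<psi>_def by (rule phase_primitive_has_real_derivative)
  have mono: "\<psi> a \<le> \<psi> b" if "x0 - T \<le> a" "a \<le> b" "b \<le> x0" for a b
  proof (rule DERIV_nonneg_imp_nondecreasing[OF \<open>a \<le> b\<close>])
    fix t assume "a \<le> t" "t \<le> b"
    then have "0 \<le> cos (2 * x0 - T - 2 * t)"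
      using that \<open>T \<le> pi / 2\<close> by (intro cos_ge_zero) auto
    then show "\<exists>y. (\<psi> has_real_derivative y) (at t) \<and> 0 \<le> y"
      using \<psi> nonneg by (blast intro: mult_nonneg_nonneg)
  qed
  txt \<open>\<open>\<psi>\<close> is nondecreasing on the window and takes the same value at both ends,
    so every interior point is a local maximum.\<close>
  have "\<psi> x0 = \<psi> (x0 - T)"
    using \<open>green_window (- T) x0 = 0\<close> by (simp add: green_window_def \<psi>_def)
  then have "\<psi> y \<le> \<psi> s" if "\<bar>s - y\<bar> < min (s - (x0 - T)) (x0 - s)" for y
  proof -
    have "x0 - T \<le> y" "y \<le> x0" using that by (auto simp: abs_less_iff)
    then show ?thesis
      using mono[of y x0] mono[of "x0 - T" s] s \<open>\<psi> x0 = \<psi> (x0 - T)\<close> by simp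
  qed
  then have "cos (2 * x0 - T - 2 * s) * h s = 0"
    using s by (intro DERIV_local_max[OF \<psi>, of "min (s - (x0 - T)) (x0 - s)"]) auto
  moreover have "0 < cos (2 * x0 - T - 2 * s)"
    using s \<open>T \<le> pi / 2\<close> by (intro cos_gt_zero_pi) auto
  ultimately show ?thesis by simp
qed

lemma periodic_solution_eq_0_imp:
  assumes "\<And>s. 0 \<le> h s" and "0 < T" "T \<le> pi / 2" and "periodic_solution x0 = 0"
  shows "h x = 0"
proof (rule periodic_eq_0_if_vanishing_on_period[where f = h and a = "x0 - T",
      OF continuous periodic \<open>0 < T\<close>])
  have "0 < sin T" using assms by (intro sin_gt_zero) auto
  then have "green_window (- T) x0 = 0"
    using \<open>periodic_solution x0 = 0\<close> by (simp add: periodic_solution_def)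
  then show "h s = 0" if "x0 - T < s" "s < x0 - T + T" for s
    using assms that by (intro green_window_eq_0_imp_vanishing) auto
qed

end

theorem mainTheorem6:
  fixes m :: nat
  assumes "m \<ge> 4"
  shows "\<exists>C::real. (m \<ge> 5 \<longrightarrow> C > 0) \<and> (m = 4 \<longrightarrow> C = 0) \<and>
    (\<forall>h :: real \<Rightarrow> real. continuous_on UNIV h \<and> (\<forall>\<theta>. h \<theta> \<ge> 0) \<and> periodic_m m h \<longrightarrow>
       (\<forall>\<theta>. 12 * inv_op m h \<theta> \<ge> C * (1 / (2 * pi) * integral {-pi..pi} h)) \<and>
       ((\<exists>\<theta>. 12 * inv_op m h \<theta> = 0) \<longrightarrow> (\<forall>\<theta>. h \<theta> = 0)))"
proof -
  define T where "T = 2 * pi / real m"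
  have T: "0 < T" "T \<le> pi / 2" "T < pi" "real m * T = 2 * pi"
    using assms by (auto simp: T_def field_simps)
  have "0 < 3 * T * cos T / sin T" if "m \<ge> 5"
  proof -
    have "T < pi / 2" using that by (simp add: T_def field_simps)
    then show ?thesis using T by (simp add: cos_gt_zero_pi sin_gt_zero)
  qed
  moreover have "3 * T * cos T / sin T = 0" if "m = 4" using that by (simp add: T_def)
  moreover have "(\<forall>\<theta>. 12 * inv_op m h \<theta> \<ge> 3 * T * cos T / sin T * (1 / (2 * pi) * integral {-pi..pi} h))
      \<and> ((\<exists>\<theta>. 12 * inv_op m h \<theta> = 0) \<longrightarrow> (\<forall>\<theta>. h \<theta> = 0))"
    if "continuous_on UNIV h" and nonneg: "\<forall>\<theta>. h \<theta> \<ge> 0" and "periodic_m m h" for h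
  proof -
    interpret periodic_source h T
      using that by unfold_locales (simp_all add: periodic_m_def T_def)
    have "inv_op m h = periodic_solution"
      using assms by (intro inv_op_eq_periodic_solution) (simp_all add: T_def)
    moreover have "3 * T * cos T / sin T * (1 / (2 * pi) * integral {-pi..pi} h)
        \<le> 12 * periodic_solution \<theta>" for \<theta>
      using nonneg T by (intro periodic_solution_ge_mean) auto
    moreover have "h \<theta> = 0" if "periodic_solution \<theta>\<^sub>0 = 0" for \<theta> \<theta>\<^sub>0
      using nonneg T that by (intro periodic_solution_eq_0_imp) auto
    ultimately show ?thesis by auto
  qed
  ultimately show ?thesis by blast
qed

end
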